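(* Let $q>0$, $R>0$. For $(\eta,\sigma)\in\mathbb{R}^2$ let $(\varphi,\tilde\varphi)$ solve on $[0,R]$ $$d\varphi=\tilde\varphi\,dx,\qquad d\tilde\varphi=(\eta^2-q)\varphi\,dx-\sigma\varphi\,dW_x,\qquad\varphi(0)=1,\ \tilde\varphi(0)=\eta,$$ and set $F(\eta,\sigma):=\tilde\varphi(R)+\eta\varphi(R)$. If $\eta_0\in(0,\sqrt q)$ satisfies $F(\eta_0,0)=0$, then $\partial_\eta F(\eta_0,0)\neq0$; explicitly, with $c_0=\sqrt{q-\eta_0^2}$, $$\partial_\eta F(\eta_0,0)=\cos(c_0R)\Big[2+\eta_0R-\frac{\eta_0^3R}{c_0^2}\Big]+\sin(c_0R)\Big[\frac{3\eta_0+2\eta_0^2R}{c_0}+\frac{\eta_0^3}{c_0^3}\Big]\neq0 .$$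
   Context: $W$ is a standard real Brownian motion. At $\sigma=0$, $\varphi(x)=\cos(cx)+\frac{\eta}{c}\sin(cx)$ with $c=\sqrt{q-\eta^2}$; zeros $\eta_0\in(0,\sqrt q)$ of $F(\cdot,0)$ are the soliton parameters of the KdV equation $\partial_tU+6U\partial_xU+\partial_x^3U=0$ with initial datum $q\mathbf{1}_{[0,R]}$ (eigenvalues $\zeta=i\eta_0$ of $\varphi''+(U_0+\zeta^2)\varphi=0$). *)

theory Defs
  imports Complex_Main
begin

text \<open>Solution family of the sigma = 0 system on [0,R]:
  phi' = psi, psi' = (eta^2 - q) phi, phi(0) = 1, psi(0) = eta (for each eta).\<close>
definition is_sol0 :: "real \<Rightarrow> real \<Rightarrow> (real \<Rightarrow> real \<Rightarrow> real) \<Rightarrow> (real \<Rightarrow> real \<Rightarrow> real) \<Rightarrow> bool" where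
  "is_sol0 q R \<phi> \<psi> \<longleftrightarrow> (\<forall>\<eta>.
      \<phi> \<eta> 0 = 1 \<and> \<psi> \<eta> 0 = \<eta> \<and>
      (\<forall>x\<in>{0..R}. (\<phi> \<eta> has_real_derivative \<psi> \<eta> x) (at x within {0..R}) \<and>
                   (\<psi> \<eta> has_real_derivative (\<eta>\<^sup>2 - q) * \<phi> \<eta> x) (at x within {0..R})))"

definition F0 :: "real \<Rightarrow> (real \<Rightarrow> real \<Rightarrow> real) \<Rightarrow> (real \<Rightarrow> real \<Rightarrow> real) \<Rightarrow> real \<Rightarrow> real" where
  "F0 R \<phi> \<psi> \<eta> = \<psi> \<eta> R + \<eta> * \<phi> \<eta> R"

end

theory Submission imports Defs "HOL-Analysis.Analysis" begin

(*
  At sigma = 0 the system is the linear oscillator phi'' = (eta^2 - q) phi.  For eta^2 < q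
  put c = sqrt (q - eta^2) > 0; then phi = cos (c x) + eta/c sin (c x) and
  psi = eta cos (c x) - c sin (c x), so F(eta,0) is an explicit smooth function of eta.

  1. oscillator_zero: a solution of f' = g, g' = -c^2 f with zero data vanishes
     (the energy c^2 f^2 + g^2 is constant); hence is_sol0 determines phi, psi
     (sol0_closed_form), and F0 agrees with the explicit function shoot_fun on |eta| < sqrt q.
  2. shoot_fun_deriv: differentiating the explicit formula gives the derivative shoot_deriv,
     which is exactly the expression D of the theorem.
  3. shoot_deriv_nonzero: at a zero of shoot_fun the identity
     2 e c^3 D = sin (c R) (e^2 + c^2)^2 (2 + e R) forces sin (c R) = 0 if D = 0, and then
     the zero condition forces cos (c R) = 0, contradicting cos^2 + sin^2 = 1.
  The theorem follows since F0 and shoot_fun agree on an open neighbourhood of eta_0.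
*)

text \<open>Uniqueness for the harmonic oscillator: the energy \<open>c\<^sup>2 f\<^sup>2 + g\<^sup>2\<close> is constant,
  so zero initial data give the zero solution.\<close>
lemma oscillator_zero:
  fixes f g :: "real \<Rightarrow> real" and c R x :: real
  assumes c: "c \<noteq> 0"
    and df: "\<And>x. x \<in> {0..R} \<Longrightarrow> (f has_real_derivative g x) (at x within {0..R})"
    and dg: "\<And>x. x \<in> {0..R} \<Longrightarrow> (g has_real_derivative - c\<^sup>2 * f x) (at x within {0..R})"
    and init: "f 0 = 0" "g 0 = 0"
    and x: "x \<in> {0..R}"
  shows "f x = 0 \<and> g x = 0"
proof -
  define E where "E x = c\<^sup>2 * (f x)\<^sup>2 + (g x)\<^sup>2" for x
  have dE: "(E has_real_derivative 0) (at x within {0..R})" if "x \<in> {0..R}" for x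
    unfolding E_def[abs_def]
    by (rule derivative_eq_intros df dg that refl)+ (simp add: field_simps)
  obtain k where k: "\<forall>x\<in>{0..R}. E x = k"
    using has_field_derivative_zero_constant[OF convex_real_interval(5) dE] by blast
  have "0 \<in> {0..R}" using x by simp
  hence "E x = E 0" using k x by simp
  also have "\<dots> = 0" by (simp add: E_def init)
  finally have "c\<^sup>2 * (f x)\<^sup>2 + (g x)\<^sup>2 = 0" unfolding E_def .
  moreover have "c\<^sup>2 * (f x)\<^sup>2 \<ge> 0" "(g x)\<^sup>2 \<ge> 0" by auto
  ultimately show ?thesis using c by (auto simp: add_nonneg_eq_0_iff)
qed

lemma sol0_closed_form:
  fixes q R \<eta> c x :: real and \<phi> \<psi> :: "real \<Rightarrow> real \<Rightarrow> real"
  assumes sol: "is_sol0 q R \<phi> \<psi>" and c: "c > 0" "c\<^sup>2 = q - \<eta>\<^sup>2" and x: "x \<in> {0..R}"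
  shows "\<phi> \<eta> x = cos (c * x) + \<eta> / c * sin (c * x)
       \<and> \<psi> \<eta> x = \<eta> * cos (c * x) - c * sin (c * x)"
proof -
  define f where "f x = \<phi> \<eta> x - (cos (c * x) + \<eta> / c * sin (c * x))" for x
  define g where "g x = \<psi> \<eta> x - (\<eta> * cos (c * x) - c * sin (c * x))" for x
  have q: "q = \<eta>\<^sup>2 + c\<^sup>2" using c by simp
  have "f x = 0 \<and> g x = 0"
  proof (rule oscillator_zero[of c R f g])
    fix x assume "x \<in> {0..R}"
    hence d\<phi>: "(\<phi> \<eta> has_real_derivative \<psi> \<eta> x) (at x within {0..R})"
      and d\<psi>: "(\<psi> \<eta> has_real_derivative (\<eta>\<^sup>2 - q) * \<phi> \<eta> x) (at x within {0..R})"
      using sol unfolding is_sol0_def by auto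
    show "(f has_real_derivative g x) (at x within {0..R})"
      unfolding f_def[abs_def]
      by (rule derivative_eq_intros d\<phi> refl)+ (use c(1) in \<open>simp add: g_def field_simps\<close>)
    show "(g has_real_derivative - c\<^sup>2 * f x) (at x within {0..R})"
      unfolding g_def[abs_def]
      by (rule derivative_eq_intros d\<psi> refl)+
         (use c(1) in \<open>simp add: q f_def field_simps power2_eq_square\<close>)
  qed (use c sol x in \<open>auto simp: f_def g_def is_sol0_def\<close>)
  thus ?thesis by (simp add: f_def g_def)
qed

definition shoot_fun :: "real \<Rightarrow> real \<Rightarrow> real \<Rightarrow> real" where
  "shoot_fun q R \<eta> = (let c = sqrt (q - \<eta>\<^sup>2) in
     (\<eta> * cos (c * R) - c * sin (c * R)) + \<eta> * (cos (c * R) + \<eta> / c * sin (c * R)))"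

definition shoot_deriv :: "real \<Rightarrow> real \<Rightarrow> real \<Rightarrow> real" where
  "shoot_deriv R \<eta> c = cos (c * R) * (2 + \<eta> * R - \<eta> ^ 3 * R / c\<^sup>2)
     + sin (c * R) * ((3 * \<eta> + 2 * \<eta>\<^sup>2 * R) / c + \<eta> ^ 3 / c ^ 3)"

lemma F0_eq_shoot_fun:
  assumes "R \<ge> 0" "is_sol0 q R \<phi> \<psi>" "\<eta>\<^sup>2 < q"
  shows "F0 R \<phi> \<psi> \<eta> = shoot_fun q R \<eta>"
proof -
  have "sqrt (q - \<eta>\<^sup>2) > 0" "(sqrt (q - \<eta>\<^sup>2))\<^sup>2 = q - \<eta>\<^sup>2" using assms(3) by auto
  from sol0_closed_form[OF assms(2) this, of R] assms(1) show ?thesis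
    by (simp add: shoot_fun_def F0_def Let_def)
qed

lemma shoot_fun_deriv:
  assumes "\<eta>\<^sup>2 < q"
  shows "(shoot_fun q R has_real_derivative shoot_deriv R \<eta> (sqrt (q - \<eta>\<^sup>2))) (at \<eta>)"
proof -
  define c where "c = sqrt (q - \<eta>\<^sup>2)"
  define C where "C \<eta> = sqrt (q - \<eta>\<^sup>2)" for \<eta>
  have qe: "q - \<eta>\<^sup>2 > 0" using assms by simp
  hence c: "c > 0" "c\<^sup>2 = q - \<eta>\<^sup>2" by (auto simp: c_def)
  have dq: "((\<lambda>x. q - x\<^sup>2) has_real_derivative - (2 * \<eta>)) (at \<eta>)"
    by (rule derivative_eq_intros refl)+ simp
  have "(C has_real_derivative inverse (sqrt (q - \<eta>\<^sup>2)) / 2 * (- (2 * \<eta>))) (at \<eta>)"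
    unfolding C_def[abs_def] by (rule DERIV_chain2[OF DERIV_real_sqrt[OF qe] dq])
  hence dC: "(C has_real_derivative - \<eta> / c) (at \<eta>)"
    by (simp add: c_def field_simps)
  have CC: "C \<eta> = c" "C \<eta> \<noteq> 0" using c by (auto simp: C_def c_def)
  have "shoot_fun q R = (\<lambda>\<eta>. (\<eta> * cos (C \<eta> * R) - C \<eta> * sin (C \<eta> * R))
                          + \<eta> * (cos (C \<eta> * R) + \<eta> / C \<eta> * sin (C \<eta> * R)))"
    by (simp add: shoot_fun_def[abs_def] C_def Let_def)
  moreover have "(\<dots> has_real_derivative shoot_deriv R \<eta> c) (at \<eta>)"
    apply (rule derivative_eq_intros refl dC CC)+
    unfolding shoot_deriv_def CC(1)
    using c(1) by (simp add: field_simps power2_eq_square power3_eq_cube)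
  ultimately show ?thesis by (simp add: c_def)
qed

lemma shoot_deriv_nonzero:
  fixes R e c :: real
  assumes R: "R > 0" and e: "e > 0" and c: "c > 0"
    and zero: "(e * cos (c * R) - c * sin (c * R)) + e * (cos (c * R) + e / c * sin (c * R)) = 0"
  shows "shoot_deriv R e c \<noteq> 0"
proof
  assume D0: "shoot_deriv R e c = 0"
  define a where "a = cos (c * R)"
  define b where "b = sin (c * R)"
  have zero': "2 * e * c * a = (c\<^sup>2 - e\<^sup>2) * b"
  proof -
    have "2 * e * c * a - c\<^sup>2 * b + e\<^sup>2 * b
        = c * ((e * a - c * b) + e * (a + e / c * b))"
      using c by (simp add: algebra_simps power2_eq_square)
    also have "\<dots> = 0" using zero by (simp add: a_def b_def)
    finally show ?thesis by (simp add: algebra_simps)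
  qed
  have "shoot_deriv R e c * (2 * e * c ^ 3)
      = (2 * e * c * a) * (2 * c\<^sup>2 + e * R * c\<^sup>2 - e ^ 3 * R)
        + b * (2 * e) * (3 * e * c\<^sup>2 + 2 * e\<^sup>2 * R * c\<^sup>2 + e ^ 3)"
    unfolding shoot_deriv_def a_def[symmetric] b_def[symmetric]
    using c by (simp add: field_simps power2_eq_square power3_eq_cube)
  also have "\<dots> = b * ((e\<^sup>2 + c\<^sup>2)\<^sup>2 * (2 + e * R))"
    unfolding zero' by (simp add: algebra_simps power2_eq_square power3_eq_cube)
  finally have "b * ((e\<^sup>2 + c\<^sup>2)\<^sup>2 * (2 + e * R)) = 0" using D0 by simp
  moreover have "(e\<^sup>2 + c\<^sup>2)\<^sup>2 * (2 + e * R) \<noteq> 0"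
  proof -
    have "e * R > 0" using e R by simp
    thus ?thesis using c by simp
  qed
  ultimately have b0: "b = 0" using e by simp
  hence "a = 0" using zero' c e by simp
  moreover have "a\<^sup>2 + b\<^sup>2 = 1" by (simp add: a_def b_def add.commute)
  ultimately show False using b0 by simp
qed

theorem mainTheorem11:
  fixes q R \<eta>\<^sub>0 :: real and \<phi> \<psi> :: "real \<Rightarrow> real \<Rightarrow> real"
  assumes "q > 0" and "R > 0"
    and "is_sol0 q R \<phi> \<psi>"
    and "0 < \<eta>\<^sub>0" and "\<eta>\<^sub>0 < sqrt q"
    and "F0 R \<phi> \<psi> \<eta>\<^sub>0 = 0"
  shows "let c\<^sub>0 = sqrt (q - \<eta>\<^sub>0\<^sup>2);
             D = cos (c\<^sub>0 * R) * (2 + \<eta>\<^sub>0 * R - \<eta>\<^sub>0 ^ 3 * R / c\<^sub>0\<^sup>2)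
               + sin (c\<^sub>0 * R) * ((3 * \<eta>\<^sub>0 + 2 * \<eta>\<^sub>0\<^sup>2 * R) / c\<^sub>0 + \<eta>\<^sub>0 ^ 3 / c\<^sub>0 ^ 3)
         in (F0 R \<phi> \<psi> has_real_derivative D) (at \<eta>\<^sub>0) \<and> D \<noteq> 0"
proof -
  define S where "S = {\<eta>::real. \<eta>\<^sup>2 < q}"
  have "open S" unfolding S_def by (intro open_Collect_less continuous_intros)
  have "\<eta>\<^sub>0\<^sup>2 < (sqrt q)\<^sup>2" using assms(4,5) by (intro power_strict_mono) auto
  hence "\<eta>\<^sub>0 \<in> S" using assms(1) by (simp add: S_def)
  define c where "c = sqrt (q - \<eta>\<^sub>0\<^sup>2)"
  have c: "c > 0" using \<open>\<eta>\<^sub>0 \<in> S\<close> by (simp add: c_def S_def)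
  have agree: "\<And>\<eta>. \<eta> \<in> S \<Longrightarrow> shoot_fun q R \<eta> = F0 R \<phi> \<psi> \<eta>"
    using F0_eq_shoot_fun[OF less_imp_le[OF assms(2)] assms(3)] by (simp add: S_def)
  have "(F0 R \<phi> \<psi> has_real_derivative shoot_deriv R \<eta>\<^sub>0 c) (at \<eta>\<^sub>0)"
    using has_field_derivative_transform_within_open[OF shoot_fun_deriv \<open>open S\<close> \<open>\<eta>\<^sub>0 \<in> S\<close> agree]
      \<open>\<eta>\<^sub>0 \<in> S\<close> by (simp add: S_def c_def)
  moreover have "shoot_deriv R \<eta>\<^sub>0 c \<noteq> 0"
    using shoot_deriv_nonzero[OF assms(2,4) c] assms(6) agree[OF \<open>\<eta>\<^sub>0 \<in> S\<close>]
    by (simp add: shoot_fun_def c_def Let_def)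
  ultimately show ?thesis by (simp add: Let_def shoot_deriv_def c_def)
qed

end
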